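(* Let $\lambda=(\lambda_1,\dots,\lambda_n)\in\mathbb{R}^n$ with $\lambda_1+\dots+\lambda_n>0$, let $\delta=\delta(\lambda)$, and let $J\subset\{1,\dots,n\}$ with $s_J(\lambda)/|J|=\delta$ and $|J|=N(\lambda)$. Define $\lambda'\in\mathbb{R}^n$ by $\lambda'_i=\lambda_i$ if $i\notin J$ and $\lambda'_i=\lambda_i-\delta$ if $i\in J$. Let $\mathcal{P}'_{ord}(n)$ be the set of $P=(I_1,\dots,I_k)\in\mathcal{P}_{ord}(n)$ for which some $r\in\{1,\dots,k\}$ satisfies $J=I_1\cup\dots\cup I_r$, and $\mathcal{P}'(n)$ its image in $\mathcal{P}(n)$. Then: (i) For every $K\subset\{1,\dots,n\}$ with $K\neq J$, $s_K(\lambda')>0$ if and only if $s_K(\lambda)>0$. (ii) $\mathcal{P}_{ord}(\lambda)=\mathcal{P}_{ord}(\lambda')\sqcup(\mathcal{P}'_{ord}(n)\cap\mathcal{P}_{ord}(\lambda))$ and $\mathcal{P}(\lambda)=\mathcal{P}(\lambda')\sqcup(\mathcal{P}'(n)\cap\mathcal{P}(\lambda))$; in particular $|\mathcal{P}_{ord}(\lambda')|<|\mathcal{P}_{ord}(\lambda)|$ and $|\mathcal{P}(\lambda')|<|\mathcal{P}(\lambda)|$. Let $m=|J|$, write $J=\{i_1<\dots<i_m\}$ and $K:=\{1,\dots,n\}\setminus J=\{j_1<\dots<j_{n-m}\}$, $u_J:J\to\{1,\dots,m\}$, $i_r\mapsto r$, $u_K:K\to\{1,\dots,n-m\}$, $j_r\mapsto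 r$; let $\sigma\in\mathfrak{S}_n$ with $\sigma(i_r)=r$ and $\sigma(j_r)=m+r$, and $\varepsilon_0=\mathrm{sgn}(\sigma)$. Define $\varphi_{ord}:\mathcal{P}'_{ord}(n)\to\mathcal{P}_{ord}(m)\times\mathcal{P}_{ord}(n-m)$ by $\varphi_{ord}(I_1,\dots,I_k)=((u_J(I_1),\dots,u_J(I_r)),(u_K(I_{r+1}),\dots,u_K(I_k)))$ where $I_1\cup\dots\cup I_r=J$, and similarly $\varphi:\mathcal{P}'(n)\to\mathcal{P}(m)\times\mathcal{P}(n-m)$. Let $\mu=(\lambda_{i_1},\dots,\lambda_{i_m})\in\mathbb{R}^m$ and $\nu=(\lambda_{j_1},\dots,\lambda_{j_{n-m}})\in\mathbb{R}^{n-m}$. Then: (iii) For every $P\in\mathcal{P}'_{ord}(n)$, if $\varphi_{ord}(P)=(P_1,P_2)$ then $\varepsilon(P)=\varepsilon_0\varepsilon(P_1)\varepsilon(P_2)$ and $\varepsilon'(P)=\varepsilon'(P_1)\varepsilon'(P_2)$. (iv) $\varphi_{ord}$ induces a bijection $\mathcal{P}'_{ord}(n)\cap\mathcal{P}_{ord}(\lambda)\to\mathcal{P}_{ord}(\mu)\times\mathcal{P}_{ord}(\nu)$, and $\varphi$ induces a bijection $\mathcal{P}'(n)\cap\mathcal{P}(\lambda)\to\mathcal{P}(\mu)\times\mathcal{P}(\nu)$.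
   Context: $s_J(\lambda)=\sum_{i\in J}\lambda_i$. $\delta(\lambda)$ is the minimum of $s_J(\lambda)/|J|$ over subsets $J$ with $s_J(\lambda)>0$; $N(\lambda)$ is the minimum of $|J|$ over subsets $J$ with $s_J(\lambda)/|J|=\delta(\lambda)$. $\mathcal{P}(n)$ (resp. $\mathcal{P}_{ord}(n)$) is the set of partitions (resp. ordered partitions) of $\{1,\dots,n\}$ into nonempty blocks. For $\lambda\in\mathbb{R}^n$: $\mathcal{P}_{ord}(\lambda)$ is the set of $(I_1,\dots,I_k)$ with $s_{I_1}(\lambda)+\dots+s_{I_i}(\lambda)>0$ for all $i$, and $\mathcal{P}(\lambda)$ the set of partitions all of whose blocks have $s_{I_\alpha}(\lambda)>0$. For $P=(I_1,\dots,I_k)$ with $n_i=|I_i|$, $\varepsilon(P)=\mathrm{sgn}(\sigma_P)$ with $\sigma_P$ the unique permutation such that $\sigma_P^{-1}$ maps $\{n_1+\dots+n_i+1,\dots,n_1+\dots+n_{i+1}\}$ increasingly onto $I_{i+1}$; $\varepsilon'(P)=(-1)^{\frac12\sum_i|I_i|(|I_i|-1)}$. *)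

theory Defs
  imports Complex_Main "HOL-Library.Disjoint_Sets" "HOL-Combinatorics.Permutations"
begin

text \<open>Vectors in R^n are functions nat => real, with indices 1..n.\<close>

definition sJ :: "(nat \<Rightarrow> real) \<Rightarrow> nat set \<Rightarrow> real" where
  "sJ lam J = (\<Sum>i\<in>J. lam i)"

definition delta :: "nat \<Rightarrow> (nat \<Rightarrow> real) \<Rightarrow> real" where
  "delta n lam = Min {sJ lam J / real (card J) | J. J \<subseteq> {1..n} \<and> sJ lam J > 0}"

definition Nmin :: "nat \<Rightarrow> (nat \<Rightarrow> real) \<Rightarrow> nat" where
  "Nmin n lam = Min {card J | J. J \<subseteq> {1..n} \<and> sJ lam J / real (card J) = delta n lam}"

definition Pord_n :: "nat \<Rightarrow> nat set list set" where
  "Pord_n n = {Ps. partition_on {1..n} (set Ps) \<and> distinct Ps}"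

definition Part_n :: "nat \<Rightarrow> nat set set set" where
  "Part_n n = {P. partition_on {1..n} P}"

definition Pord :: "nat \<Rightarrow> (nat \<Rightarrow> real) \<Rightarrow> nat set list set" where
  "Pord n lam = {Ps \<in> Pord_n n. \<forall>i\<in>{1..length Ps}. (\<Sum>j<i. sJ lam (Ps ! j)) > 0}"

definition Part :: "nat \<Rightarrow> (nat \<Rightarrow> real) \<Rightarrow> nat set set set" where
  "Part n lam = {P \<in> Part_n n. \<forall>I\<in>P. sJ lam I > 0}"

text \<open>sigma_P^{-1} sends the positions n_1+..+n_i+1,..,n_1+..+n_{i+1} increasingly onto I_{i+1},
  i.e. position p goes to the p-th entry of the concatenation of the sorted blocks.\<close>
definition sigmaP_inv :: "nat set list \<Rightarrow> nat \<Rightarrow> nat" where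
  "sigmaP_inv Ps p = (let L = concat (map sorted_list_of_set Ps) in
      if 1 \<le> p \<and> p \<le> length L then L ! (p - 1) else p)"

definition sigmaP :: "nat set list \<Rightarrow> nat \<Rightarrow> nat" where
  "sigmaP Ps = inv (sigmaP_inv Ps)"

definition eps :: "nat set list \<Rightarrow> int" where
  "eps Ps = sign (sigmaP Ps)"

definition eps' :: "nat set list \<Rightarrow> int" where
  "eps' Ps = (-1) ^ ((\<Sum>I\<leftarrow>Ps. card I * (card I - 1)) div 2)"

definition lam_prime :: "nat \<Rightarrow> (nat \<Rightarrow> real) \<Rightarrow> nat set \<Rightarrow> nat \<Rightarrow> real" where
  "lam_prime n lam J i = (if i \<in> J then lam i - delta n lam else lam i)"

definition Pord' :: "nat \<Rightarrow> nat set \<Rightarrow> nat set list set" where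
  "Pord' n J = {Ps \<in> Pord_n n. \<exists>r\<in>{1..length Ps}. J = \<Union>(set (take r Ps))}"

definition Part' :: "nat \<Rightarrow> nat set \<Rightarrow> nat set set set" where
  "Part' n J = set ` Pord' n J"

definition elem_at :: "nat set \<Rightarrow> nat \<Rightarrow> nat" where
  "elem_at A r = sorted_list_of_set A ! (r - 1)"

definition u :: "nat set \<Rightarrow> nat \<Rightarrow> nat" where
  "u A i = (THE r. 1 \<le> r \<and> r \<le> card A \<and> elem_at A r = i)"

definition Kc :: "nat \<Rightarrow> nat set \<Rightarrow> nat set" where
  "Kc n J = {1..n} - J"

definition sigma0 :: "nat \<Rightarrow> nat set \<Rightarrow> nat \<Rightarrow> nat" where
  "sigma0 n J i = (if i \<in> J then u J i
                   else if i \<in> Kc n J then card J + u (Kc n J) i else i)"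

definition eps0 :: "nat \<Rightarrow> nat set \<Rightarrow> int" where
  "eps0 n J = sign (sigma0 n J)"

definition phi_ord :: "nat \<Rightarrow> nat set \<Rightarrow> nat set list \<Rightarrow> nat set list \<times> nat set list" where
  "phi_ord n J Ps = (let r = (THE r. 1 \<le> r \<and> r \<le> length Ps \<and> \<Union>(set (take r Ps)) = J) in
      (map (\<lambda>I. u J ` I) (take r Ps), map (\<lambda>I. u (Kc n J) ` I) (drop r Ps)))"

definition phi :: "nat \<Rightarrow> nat set \<Rightarrow> nat set set \<Rightarrow> nat set set \<times> nat set set" where
  "phi n J P = ((\<lambda>I. u J ` I) ` {I \<in> P. I \<subseteq> J},
                (\<lambda>I. u (Kc n J) ` I) ` {I \<in> P. I \<subseteq> Kc n J})"

definition mu :: "(nat \<Rightarrow> real) \<Rightarrow> nat set \<Rightarrow> nat \<Rightarrow> real" where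
  "mu lam J r = lam (elem_at J r)"

definition nu :: "nat \<Rightarrow> (nat \<Rightarrow> real) \<Rightarrow> nat set \<Rightarrow> nat \<Rightarrow> real" where
  "nu n lam J r = lam (elem_at (Kc n J) r)"

end

theory Submission
  imports Defs
begin

(* Lowering lambda by delta on J lowers s_K by delta * |K inter J|: this makes
   s_J = 0 but keeps s_K > 0 for every other K with s_K > 0 (for K a proper subset of J by the
   minimality of |J|, otherwise because |K inter J| < |K|). So lambda and lambda' admit the same
   partitions, except the lambda-admissible ones in which J is the union of an initial segment of
   blocks. Such a partition is a partition of J followed by one of its complement K. Relabelling
   both halves order-preservingly turns lambda-admissibility into mu- and nu-admissibility, since
   s_(J union V) > 0 iff s_V > 0 for nonempty V inside K. For the signs, sigma_0 composed with
   sigma_P^-1 is sigma_P1^-1 beside the shift of sigma_P2^-1 by |J|, and eps' is multiplicative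
   under concatenation since every |I| * (|I| - 1) is even. *)

lemma bij_betw_Int:
  assumes "bij_betw f A B" "\<And>x. x \<in> A \<Longrightarrow> f x \<in> D \<longleftrightarrow> x \<in> C" "D \<subseteq> B"
  shows "bij_betw f (A \<inter> C) D"
proof (rule bij_betw_subset[OF assms(1)])
  show "f ` (A \<inter> C) = D"
    using assms bij_betw_imp_surj_on[OF assms(1)] by blast
qed simp

lemma ball_atLeastAtMost_add_iff:
  fixes a b :: nat
  shows "(\<forall>i\<in>{1..a + b}. Q i) \<longleftrightarrow> (\<forall>i\<in>{1..a}. Q i) \<and> (\<forall>j\<in>{1..b}. Q (a + j))"
proof (intro iffI conjI ballI)
  fix i assume "(\<forall>i\<in>{1..a}. Q i) \<and> (\<forall>j\<in>{1..b}. Q (a + j))" "i \<in> {1..a + b}"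
  then show "Q i"
  proof (cases "i \<le> a")
    case False
    then have "i - a \<in> {1..b}" "a + (i - a) = i"
      using \<open>i \<in> {1..a + b}\<close> by auto
    then show ?thesis
      using \<open>(\<forall>i\<in>{1..a}. Q i) \<and> (\<forall>j\<in>{1..b}. Q (a + j))\<close> by metis
  qed auto
qed auto

section \<open>Ranks in finite sets of naturals\<close>

lemma bij_betw_nth_pred:
  assumes "distinct xs"
  shows "bij_betw (\<lambda>p. xs ! (p - 1)) {1..length xs} (set xs)"
proof -
  have "bij_betw (\<lambda>p. p - 1) {1..length xs} {..<length xs}"
    by (rule bij_betwI[where g = Suc]) auto
  moreover have "bij_betw ((!) xs) {..<length xs} (set xs)"
    using assms by (rule bij_betw_nth) auto
  ultimately show ?thesis
    using bij_betw_trans unfolding comp_def by blast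
qed

lemma bij_betw_elem_at:
  assumes "finite A"
  shows "bij_betw (elem_at A) {1..card A} A"
  using bij_betw_nth_pred[of "sorted_list_of_set A"] assms
  by (simp add: elem_at_def[abs_def])

lemma elem_at_less:
  assumes "finite A" "1 \<le> r" "r < s" "s \<le> card A"
  shows "elem_at A r < elem_at A s"
  using assms sorted_wrt_nth_less[OF strict_sorted_list_of_set, of "r - 1" "s - 1" A]
  by (simp add: elem_at_def)

lemma u_eq_the_inv_into: "u A = the_inv_into {1..card A} (elem_at A)"
  by (simp add: fun_eq_iff u_def the_inv_into_def conj_assoc)

lemma bij_betw_u:
  assumes "finite A"
  shows "bij_betw (u A) A {1..card A}"
  using bij_betw_the_inv_into[OF bij_betw_elem_at[OF assms]] by (simp add: u_eq_the_inv_into)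

lemma u_elem_at:
  assumes "finite A" "r \<in> {1..card A}"
  shows "u A (elem_at A r) = r"
  using the_inv_into_f_f[OF bij_betw_imp_inj_on[OF bij_betw_elem_at]] assms
  by (simp add: u_eq_the_inv_into)

lemma elem_at_u:
  assumes "finite A" "i \<in> A"
  shows "elem_at A (u A i) = i"
  using f_the_inv_into_f_bij_betw[OF bij_betw_elem_at] assms
  by (simp add: u_eq_the_inv_into)

lemma sJ_image:
  assumes "inj_on h X"
  shows "sJ f (h ` X) = sJ (\<lambda>x. f (h x)) X"
  using sum.reindex[OF assms] by (simp add: sJ_def comp_def)

lemma sJ_relabel:
  assumes "finite S" "X \<subseteq> S"
  shows "sJ (\<lambda>r. f (elem_at S r)) (u S ` X) = sJ f X"
proof -
  have "inj_on (u S) X"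
    using bij_betw_imp_inj_on[OF bij_betw_u[OF assms(1)]] assms(2) by (rule inj_on_subset)
  then have "sJ (\<lambda>r. f (elem_at S r)) (u S ` X) = sJ (\<lambda>i. f (elem_at S (u S i))) X"
    by (rule sJ_image)
  also have "\<dots> = sJ f X"
    using assms elem_at_u unfolding sJ_def by (intro sum.cong) auto
  finally show ?thesis .
qed

section \<open>Ordered partitions\<close>

definition ord_partition_on :: "'a set \<Rightarrow> 'a set list \<Rightarrow> bool" where
  "ord_partition_on S Ps \<longleftrightarrow> partition_on S (set Ps) \<and> distinct Ps"

lemma Pord_n_eq: "Pord_n N = {Ps. ord_partition_on {1..N} Ps}"
  by (simp add: Pord_n_def ord_partition_on_def)

lemma partition_on_Un:
  assumes "partition_on A P" "partition_on B Q" "A \<inter> B = {}"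
  shows "partition_on (A \<union> B) (P \<union> Q)"
  using assms by (auto simp: partition_on_def intro: disjoint_union)

lemma ord_partition_on_append:
  assumes "ord_partition_on A Ps" "ord_partition_on B Qs" "A \<inter> B = {}"
  shows "ord_partition_on (A \<union> B) (Ps @ Qs)"
proof -
  have "set Ps \<inter> set Qs = {}"
  proof (intro equals0I)
    fix I assume "I \<in> set Ps \<inter> set Qs"
    then have "I \<subseteq> A \<inter> B" "I \<noteq> {}"
      using assms by (auto simp: ord_partition_on_def partition_on_def)
    then show False using assms(3) by blast
  qed
  then show ?thesis
    using assms partition_on_Un by (auto simp: ord_partition_on_def)
qed

lemma ord_partition_on_appendD:
  assumes "ord_partition_on S (Ps @ Qs)"
  shows "ord_partition_on (\<Union>(set Ps)) Ps" "ord_partition_on (S - \<Union>(set Ps)) Qs"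
proof -
  have P: "partition_on S (set Ps \<union> set Qs)" and dist: "distinct (Ps @ Qs)"
    using assms by (auto simp: ord_partition_on_def)
  have disj: "disjoint (set Ps)" "disjoint (set Qs)"
    using pairwise_subset[OF partition_onD2[OF P]] by auto
  have "\<Union>(set Ps) \<inter> \<Union>(set Qs) = {}"
  proof (intro equals0I)
    fix x assume "x \<in> \<Union>(set Ps) \<inter> \<Union>(set Qs)"
    then obtain I I' where "I \<in> set Ps" "I' \<in> set Qs" "x \<in> I" "x \<in> I'" by blast
    moreover have "I \<noteq> I'" using calculation dist by auto
    ultimately show False using disjointD[OF partition_onD2[OF P]] by blast
  qed
  moreover have "S = \<Union>(set Ps) \<union> \<Union>(set Qs)"
    using partition_onD1[OF P] by simp
  ultimately have "S - \<Union>(set Ps) = \<Union>(set Qs)" by blast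
  then show "ord_partition_on (\<Union>(set Ps)) Ps" "ord_partition_on (S - \<Union>(set Ps)) Qs"
    using disj partition_onD3[OF P] dist by (auto simp: ord_partition_on_def partition_on_def)
qed

lemma ord_partition_on_map_image:
  assumes "ord_partition_on A Ps" "inj_on h A"
  shows "ord_partition_on (h ` A) (map ((`) h) Ps)"
proof -
  have P: "partition_on A (set Ps)" "distinct Ps"
    using assms(1) by (auto simp: ord_partition_on_def)
  have "(`) h ` set Ps - {{}} = (`) h ` set Ps"
    using partition_onD3[OF P(1)] by auto
  then have "partition_on (h ` A) (set (map ((`) h) Ps))"
    using partition_on_inj_image[OF P(1) assms(2)] by simp
  moreover have "inj_on ((`) h) (set Ps)"
    using assms(2) partition_onD1[OF P(1)] by (intro inj_on_image) simp
  ultimately show ?thesis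
    using P(2) by (simp add: ord_partition_on_def distinct_map)
qed

lemma map_image_cancel:
  assumes "\<And>x. x \<in> \<Union>(set Ps) \<Longrightarrow> g (h x) = x"
  shows "map ((`) g) (map ((`) h) Ps) = Ps"
proof -
  have "g ` h ` I = I" if "I \<in> set Ps" for I
  proof -
    have "(\<lambda>x. g (h x)) ` I = (\<lambda>x. x) ` I"
      by (rule image_cong) (use assms that in auto)
    then show ?thesis by (simp add: image_image)
  qed
  then show ?thesis by (simp add: map_idI)
qed

definition prefix_union :: "'a set list \<Rightarrow> nat \<Rightarrow> 'a set" where
  "prefix_union Ps i = \<Union>(set (take i Ps))"

lemma prefix_union_append:
  "prefix_union (Ps @ Qs) i =
     (if i \<le> length Ps then prefix_union Ps i else \<Union>(set Ps) \<union> prefix_union Qs (i - length Ps))"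
  by (auto simp: prefix_union_def)

lemma prefix_union_map_image: "prefix_union (map ((`) h) Ps) i = h ` prefix_union Ps i"
  by (auto simp: prefix_union_def take_map)

lemma prefix_union_Suc:
  "i < length Ps \<Longrightarrow> prefix_union Ps (Suc i) = prefix_union Ps i \<union> Ps ! i"
  by (auto simp: prefix_union_def take_Suc_conv_app_nth)

lemma prefix_union_subset: "partition_on S (set Ps) \<Longrightarrow> prefix_union Ps i \<subseteq> S"
  by (auto simp: prefix_union_def partition_on_def dest: in_set_takeD)

lemma prefix_union_nonempty:
  assumes "partition_on S (set Ps)" "1 \<le> i" "i \<le> length Ps"
  shows "prefix_union Ps i \<noteq> {}"
proof -
  have "Ps ! 0 \<in> set (take i Ps)"
    using nth_mem[of 0 "take i Ps"] assms by simp
  moreover have "Ps ! 0 \<in> set Ps"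
    using assms(2,3) by (intro nth_mem) linarith
  then have "Ps ! 0 \<noteq> {}"
    using partition_onD3[OF assms(1)] by auto
  ultimately show ?thesis by (auto simp: prefix_union_def)
qed

lemma nth_disjoint_prefix_union:
  assumes "ord_partition_on S Ps" "i < length Ps"
  shows "Ps ! i \<inter> prefix_union Ps i = {}"
proof -
  have "Ps ! i \<in> set (drop i Ps)"
    using Cons_nth_drop_Suc[OF assms(2)] by (metis list.set_intros(1))
  then have "Ps ! i \<notin> set (take i Ps)"
    using assms(1) set_take_disj_set_drop_if_distinct[of Ps i i]
    by (auto simp: ord_partition_on_def)
  moreover have "Ps ! i \<in> set Ps" "disjoint (set Ps)"
    using assms by (auto simp: ord_partition_on_def partition_on_def)
  ultimately have "Ps ! i \<inter> I = {}" if "I \<in> set (take i Ps)" for I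
    using that in_set_takeD[OF that] by (metis disjointD)
  then show ?thesis by (auto simp: prefix_union_def)
qed

lemma prefix_union_psubset:
  assumes "ord_partition_on S Ps" "r < r'" "r' \<le> length Ps"
  shows "prefix_union Ps r \<subset> prefix_union Ps r'"
proof -
  have "prefix_union Ps (Suc r) \<subseteq> prefix_union Ps r'"
    using set_take_subset_set_take[of "Suc r" r' Ps] assms(2) by (auto simp: prefix_union_def)
  then have sub: "prefix_union Ps r \<union> Ps ! r \<subseteq> prefix_union Ps r'"
    using prefix_union_Suc[of r Ps] assms(2,3) by simp
  have "Ps ! r \<in> set Ps"
    using assms(2,3) by (intro nth_mem) linarith
  then have "Ps ! r \<noteq> {}"
    using assms(1) partition_onD3[of S "set Ps"] by (auto simp: ord_partition_on_def)
  moreover have "Ps ! r \<inter> prefix_union Ps r = {}"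
    using nth_disjoint_prefix_union[OF assms(1)] assms(2,3) by simp
  ultimately show ?thesis
    using sub by blast
qed

lemma sum_blocks_eq_sJ_prefix_union:
  assumes "ord_partition_on S Ps" "finite S" "i \<le> length Ps"
  shows "(\<Sum>j<i. sJ f (Ps ! j)) = sJ f (prefix_union Ps i)"
  using assms(3)
proof (induction i)
  case 0
  then show ?case by (simp add: prefix_union_def sJ_def)
next
  case (Suc i)
  have "finite (prefix_union Ps i)" "finite (Ps ! i)"
    using assms Suc.prems prefix_union_subset[of S Ps] prefix_union_Suc[of i Ps]
    by (auto simp: ord_partition_on_def intro: finite_subset)
  then show ?case
    using Suc nth_disjoint_prefix_union[OF assms(1), of i]
    by (simp add: prefix_union_Suc sJ_def sum.union_disjoint Int_commute)
qed

lemma Pord_eq: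
  "Pord N f = {Ps \<in> Pord_n N. \<forall>i\<in>{1..length Ps}. sJ f (prefix_union Ps i) > 0}"
proof -
  have "(\<Sum>j<i. sJ f (Ps ! j)) = sJ f (prefix_union Ps i)"
    if "Ps \<in> Pord_n N" "i \<in> {1..length Ps}" for Ps i
    using that by (intro sum_blocks_eq_sJ_prefix_union[of "{1..N}"]) (auto simp: Pord_n_eq)
  then show ?thesis
    unfolding Pord_def by auto
qed

lemma Pord'_iff_append:
  "Ps \<in> Pord' n J \<longleftrightarrow> Ps \<in> Pord_n n \<and> (\<exists>A B. Ps = A @ B \<and> A \<noteq> [] \<and> \<Union>(set A) = J)"
proof
  assume "Ps \<in> Pord' n J"
  then obtain r where "Ps \<in> Pord_n n" "r \<in> {1..length Ps}" "J = \<Union>(set (take r Ps))"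
    unfolding Pord'_def by blast
  then show "Ps \<in> Pord_n n \<and> (\<exists>A B. Ps = A @ B \<and> A \<noteq> [] \<and> \<Union>(set A) = J)"
    by (intro conjI exI[of _ "take r Ps"] exI[of _ "drop r Ps"]) auto
next
  assume "Ps \<in> Pord_n n \<and> (\<exists>A B. Ps = A @ B \<and> A \<noteq> [] \<and> \<Union>(set A) = J)"
  then obtain A B where "Ps \<in> Pord_n n" "Ps = A @ B" "A \<noteq> []" "\<Union>(set A) = J" by blast
  then show "Ps \<in> Pord' n J"
    unfolding Pord'_def by (intro CollectI conjI bexI[of _ "length A"]) (simp_all add: Suc_le_eq)
qed

lemma phi_ord_append:
  assumes "ord_partition_on S (A @ B)" "A \<noteq> []" "\<Union>(set A) = J"
  shows "phi_ord n J (A @ B) = (map ((`) (u J)) A, map ((`) (u (Kc n J))) B)"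
proof -
  have "(THE r. 1 \<le> r \<and> r \<le> length (A @ B) \<and> \<Union>(set (take r (A @ B))) = J) = length A"
  proof (rule the_equality)
    show "1 \<le> length A \<and> length A \<le> length (A @ B) \<and> \<Union>(set (take (length A) (A @ B))) = J"
      using assms(2,3) by (simp add: Suc_le_eq)
  next
    fix r assume r: "1 \<le> r \<and> r \<le> length (A @ B) \<and> \<Union>(set (take r (A @ B))) = J"
    then have "prefix_union (A @ B) r = prefix_union (A @ B) (length A)"
      using assms(3) by (simp add: prefix_union_def)
    then show "r = length A"
      using prefix_union_psubset[OF assms(1), of r "length A"]
        prefix_union_psubset[OF assms(1), of "length A" r] r
      by (cases r "length A" rule: linorder_cases) auto
  qed
  then show ?thesis by (simp add: phi_ord_def Let_def)
qed

lemma map_image_u_in_Pord_n: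
  assumes "finite S" "ord_partition_on S Qs"
  shows "map ((`) (u S)) Qs \<in> Pord_n (card S)"
  using ord_partition_on_map_image[OF assms(2) bij_betw_imp_inj_on[OF bij_betw_u[OF assms(1)]]]
    bij_betw_imp_surj_on[OF bij_betw_u[OF assms(1)]]
  by (simp add: Pord_n_eq)

lemma ord_partition_on_map_image_elem_at:
  assumes "finite S" "L \<in> Pord_n (card S)"
  shows "ord_partition_on S (map ((`) (elem_at S)) L)"
  using ord_partition_on_map_image[of "{1..card S}" L "elem_at S"] assms
    bij_betw_elem_at[OF assms(1)]
  by (simp add: Pord_n_eq bij_betw_def)

lemma map_image_elem_at_u:
  assumes "finite S" "ord_partition_on S Qs"
  shows "map ((`) (elem_at S)) (map ((`) (u S)) Qs) = Qs"
  using assms elem_at_u by (intro map_image_cancel) (auto simp: ord_partition_on_def partition_on_def)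

lemma map_image_u_elem_at:
  assumes "finite S" "L \<in> Pord_n (card S)"
  shows "map ((`) (u S)) (map ((`) (elem_at S)) L) = L"
  using assms u_elem_at
  by (intro map_image_cancel) (auto simp: Pord_n_eq ord_partition_on_def partition_on_def)

lemma Pord_map_image_u_iff:
  assumes "finite S" "ord_partition_on S Qs"
  shows "map ((`) (u S)) Qs \<in> Pord (card S) (\<lambda>r. f (elem_at S r)) \<longleftrightarrow>
           (\<forall>i\<in>{1..length Qs}. sJ f (prefix_union Qs i) > 0)"
proof -
  have "sJ (\<lambda>r. f (elem_at S r)) (prefix_union (map ((`) (u S)) Qs) i) = sJ f (prefix_union Qs i)"
    for i
    using sJ_relabel[OF assms(1) prefix_union_subset] assms(2)
    by (simp add: prefix_union_map_image ord_partition_on_def)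
  then show ?thesis
    using map_image_u_in_Pord_n[OF assms] by (simp add: Pord_eq)
qed

lemma Part_image_u_iff:
  assumes "finite S" "partition_on S Q"
  shows "(`) (u S) ` Q \<in> Part (card S) (\<lambda>r. f (elem_at S r)) \<longleftrightarrow> (\<forall>I\<in>Q. sJ f I > 0)"
proof -
  have "(`) (u S) ` Q - {{}} = (`) (u S) ` Q"
    using partition_onD3[OF assms(2)] by auto
  then have "partition_on {1..card S} ((`) (u S) ` Q)"
    using partition_on_inj_image[OF assms(2) bij_betw_imp_inj_on[OF bij_betw_u[OF assms(1)]]]
      bij_betw_imp_surj_on[OF bij_betw_u[OF assms(1)]]
    by simp
  moreover have "sJ (\<lambda>r. f (elem_at S r)) (u S ` I) = sJ f I" if "I \<in> Q" for I
    using sJ_relabel[OF assms(1)] partition_onD1[OF assms(2)] that by blast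
  ultimately show ?thesis
    by (auto simp: Part_def Part_n_def)
qed

lemma Part_n_eq_set_Pord_n: "Part_n N = set ` Pord_n N"
proof (intro equalityI subsetI)
  fix P assume "P \<in> Part_n N"
  then have "partition_on {1..N} P" by (simp add: Part_n_def)
  moreover obtain L where "set L = P" "distinct L"
    using finite_distinct_list[OF finite_elements[OF _ calculation]] by auto
  ultimately show "P \<in> set ` Pord_n N"
    by (auto simp: Pord_n_def)
qed (auto simp: Pord_n_def Part_n_def)

lemma blocks_subset_eq:
  assumes "partition_on X P" "partition_on Y Q" "X \<inter> Y = {}"
  shows "{I \<in> P \<union> Q. I \<subseteq> X} = P"
proof (intro equalityI subsetI)
  fix I assume I: "I \<in> {I \<in> P \<union> Q. I \<subseteq> X}"
  show "I \<in> P"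
  proof (rule ccontr)
    assume "I \<notin> P"
    then have "I \<in> Q" using I by blast
    then have "I \<subseteq> Y" "I \<noteq> {}"
      using partition_onD1[OF assms(2)] partition_onD3[OF assms(2)] by auto
    then show False using I assms(3) by blast
  qed
next
  fix I assume "I \<in> P"
  then show "I \<in> {I \<in> P \<union> Q. I \<subseteq> X}"
    using partition_onD1[OF assms(1)] by auto
qed

section \<open>Signs of ordered partitions\<close>

lemma eps'_append: "eps' (A @ B) = eps' A * eps' B"
proof -
  have "even (card I * (card I - 1))" for I :: "nat set"
    by (cases "card I") auto
  then have "even (\<Sum>I\<leftarrow>A. card I * (card I - 1))"
    by (induction A) auto
  then show ?thesis
    by (simp add: eps'_def div_plus_div_distrib_dvd_left power_add)
qed

lemma eps'_map_image:
  assumes "inj_on h (\<Union>(set A))"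
  shows "eps' (map ((`) h) A) = eps' A"
proof -
  have "card (h ` I) = card I" if "I \<in> set A" for I
    using card_image[OF inj_on_subset[OF assms]] that by blast
  then show ?thesis
    unfolding eps'_def by (simp add: comp_def cong: map_cong)
qed

definition block_word :: "nat set list \<Rightarrow> nat list" where
  "block_word Ps = concat (map sorted_list_of_set Ps)"

lemma block_word_append: "block_word (A @ B) = block_word A @ block_word B"
  by (simp add: block_word_def)

lemma sigmaP_inv_block_word:
  "sigmaP_inv Ps p =
     (if 1 \<le> p \<and> p \<le> length (block_word Ps) then block_word Ps ! (p - 1) else p)"
  by (simp add: sigmaP_inv_def block_word_def Let_def)

lemma block_word_ord_partition_on:
  assumes "ord_partition_on S Ps" "finite S"
  shows "distinct (block_word Ps)" "set (block_word Ps) = S" "length (block_word Ps) = card S"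
proof -
  have P: "partition_on S (set Ps)" "distinct Ps"
    using assms(1) by (auto simp: ord_partition_on_def)
  have fin: "finite I" if "I \<in> set Ps" for I
    using partition_onD1[OF P(1)] that assms(2) by (meson Union_upper finite_subset)
  have "inj_on sorted_list_of_set (set Ps)"
    by (rule inj_onI) (metis fin set_sorted_list_of_set)
  then show dist: "distinct (block_word Ps)"
    unfolding block_word_def
  proof (intro distinct_concat)
    fix ys zs assume "ys \<in> set (map sorted_list_of_set Ps)" "zs \<in> set (map sorted_list_of_set Ps)"
      "ys \<noteq> zs"
    then obtain I I' where "I \<in> set Ps" "I' \<in> set Ps" "I \<noteq> I'"
      "ys = sorted_list_of_set I" "zs = sorted_list_of_set I'"
      by auto
    then show "set ys \<inter> set zs = {}"
      using disjointD[OF partition_onD2[OF P(1)]] fin by simp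
  qed (use P(2) in \<open>auto simp: distinct_map\<close>)
  show set: "set (block_word Ps) = S"
    using fin partition_onD1[OF P(1)] by (simp add: block_word_def)
  show "length (block_word Ps) = card S"
    using distinct_card[OF dist] set by simp
qed

lemma sigmaP_inv_permutes:
  assumes "Ps \<in> Pord_n N"
  shows "sigmaP_inv Ps permutes {1..N}"
proof (rule bij_imp_permutes)
  have w: "distinct (block_word Ps)" "set (block_word Ps) = {1..N}" "length (block_word Ps) = N"
    using block_word_ord_partition_on[of "{1..N}" Ps] assms by (auto simp: Pord_n_eq)
  show "bij_betw (sigmaP_inv Ps) {1..N} {1..N}"
    using bij_betw_nth_pred[OF w(1)] w(2,3)
    by (subst bij_betw_cong[where g = "\<lambda>p. block_word Ps ! (p - 1)"])
      (auto simp: sigmaP_inv_block_word)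
  show "sigmaP_inv Ps x = x" if "x \<notin> {1..N}" for x
    using that by (auto simp: sigmaP_inv_block_word w(3))
qed

lemma eps_eq_sign_sigmaP_inv:
  assumes "Ps \<in> Pord_n N"
  shows "eps Ps = sign (sigmaP_inv Ps)"
proof -
  have "permutation (sigmaP_inv Ps)"
    using permutes_imp_permutation[OF _ sigmaP_inv_permutes[OF assms]] by simp
  then show ?thesis
    unfolding eps_def sigmaP_def by (rule sign_inverse)
qed

lemma sorted_list_of_set_image_elem_at:
  assumes "finite S" "Y \<subseteq> {1..card S}"
  shows "sorted_list_of_set (elem_at S ` Y) = map (elem_at S) (sorted_list_of_set Y)"
proof -
  have fin: "finite Y"
    using assms(2) finite_subset by blast
  have inj: "inj_on (elem_at S) Y"
    using bij_betw_imp_inj_on[OF bij_betw_elem_at[OF assms(1)]] assms(2) by (rule inj_on_subset)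
  have "sorted_wrt (<) (map (elem_at S) (sorted_list_of_set Y))"
    unfolding sorted_wrt_map
  proof (rule sorted_wrt_mono_rel[OF _ strict_sorted_list_of_set])
    fix r s assume "r \<in> set (sorted_list_of_set Y)" "s \<in> set (sorted_list_of_set Y)" "r < s"
    then have "1 \<le> r" "s \<le> card S"
      using assms(2) fin by auto
    then show "elem_at S r < elem_at S s"
      using elem_at_less[OF assms(1)] \<open>r < s\<close> by blast
  qed
  then show ?thesis
    using sorted_list_of_set_unique[of "elem_at S ` Y" "map (elem_at S) (sorted_list_of_set Y)"]
      fin card_image[OF inj] by simp
qed

lemma block_word_map_image_u:
  assumes "finite S" "\<forall>I\<in>set Qs. I \<subseteq> S"
  shows "map (elem_at S) (block_word (map ((`) (u S)) Qs)) = block_word Qs"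
proof -
  have "map (elem_at S) (sorted_list_of_set (u S ` I)) = sorted_list_of_set I" if "I \<subseteq> S" for I
  proof -
    have "u S ` I \<subseteq> {1..card S}" "elem_at S ` u S ` I = I"
      using bij_betwE[OF bij_betw_u[OF assms(1)]] elem_at_u[OF assms(1)] that
      by (auto simp: image_image subset_iff image_iff)
    then show ?thesis
      using sorted_list_of_set_image_elem_at[OF assms(1)] by metis
  qed
  then show ?thesis
    using assms(2) by (simp add: block_word_def map_concat comp_def cong: map_cong)
qed

lemma shift_permutes:
  fixes m k :: nat
  assumes "p permutes {1..k}"
  defines "q \<equiv> \<lambda>x. if x \<in> {m + 1..m + k} then p (x - m) + m else x"
  shows "q permutes {m + 1..m + k}" "sign q = sign p"
proof -
  have "bij_betw (\<lambda>y. y + m) {1..k} {m + 1..m + k}"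
    by (rule bij_betwI[where g = "\<lambda>y. y - m"]) auto
  then have pb: "permutes_bij_finite p {1..k} {m + 1..m + k} (\<lambda>y. y + m) (\<lambda>y. y - m)"
    using assms(1) by unfold_locales simp_all
  show "q permutes {m + 1..m + k}"
    using permutes_bij.permutes_p'[OF pb[unfolded permutes_bij_finite_def, THEN conjunct1]]
    by (simp add: q_def)
  show "sign q = sign p"
    using permutes_bij_finite.sign_p'[OF pb] by (simp add: q_def)
qed

section \<open>Splitting the coordinates along \<open>J\<close>\<close>

locale coordinate_split =
  fixes n :: nat and J :: "nat set"
  assumes J_subset: "J \<subseteq> {1..n}" and J_nonempty: "J \<noteq> {}"
begin

abbreviation m :: nat where "m \<equiv> card J"
abbreviation K :: "nat set" where "K \<equiv> Kc n J"

lemma finite_J: "finite J"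
  using J_subset finite_subset by blast

lemma finite_K: "finite K"
  by (simp add: Kc_def)

lemma J_Int_K: "J \<inter> K = {}"
  by (auto simp: Kc_def)

lemma J_Un_K: "J \<union> K = {1..n}"
  using J_subset by (auto simp: Kc_def)

lemma card_K: "card K = n - m"
  using J_subset by (simp add: Kc_def card_Diff_subset finite_J)

lemma m_le_n: "m \<le> n"
  using J_subset card_mono[of "{1..n}" J] by simp

lemma Pord'_iff: "Ps \<in> Pord' n J \<longleftrightarrow> (\<exists>A B. Ps = A @ B \<and> ord_partition_on J A \<and> ord_partition_on K B)"
proof
  assume "Ps \<in> Pord' n J"
  then obtain A B where "Ps = A @ B" "ord_partition_on {1..n} (A @ B)" "\<Union>(set A) = J"
    by (auto simp: Pord'_iff_append Pord_n_eq)
  then show "\<exists>A B. Ps = A @ B \<and> ord_partition_on J A \<and> ord_partition_on K B"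
    using ord_partition_on_appendD[of "{1..n}" A B] by (auto simp: Kc_def)
next
  assume "\<exists>A B. Ps = A @ B \<and> ord_partition_on J A \<and> ord_partition_on K B"
  then obtain A B where AB: "Ps = A @ B" "ord_partition_on J A" "ord_partition_on K B"
    by blast
  then have "ord_partition_on {1..n} Ps"
    using ord_partition_on_append[OF AB(2,3) J_Int_K] J_Un_K by simp
  moreover have "\<Union>(set A) = J" "A \<noteq> []"
    using AB(2) J_nonempty by (auto simp: ord_partition_on_def partition_on_def)
  ultimately show "Ps \<in> Pord' n J"
    using AB(1) by (auto simp: Pord'_iff_append Pord_n_eq)
qed

lemma phi_ord_split:
  assumes "ord_partition_on J A" "ord_partition_on K B"
  shows "phi_ord n J (A @ B) = (map ((`) (u J)) A, map ((`) (u K)) B)"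
proof (rule phi_ord_append[OF ord_partition_on_append[OF assms J_Int_K]])
  show "\<Union>(set A) = J" "A \<noteq> []"
    using assms(1) J_nonempty by (auto simp: ord_partition_on_def partition_on_def)
qed

definition phi_ord_inv :: "nat set list \<times> nat set list \<Rightarrow> nat set list" where
  "phi_ord_inv = (\<lambda>(L1, L2). map ((`) (elem_at J)) L1 @ map ((`) (elem_at K)) L2)"

lemma phi_ord_in_Pord_n:
  "Ps \<in> Pord' n J \<Longrightarrow> phi_ord n J Ps \<in> Pord_n m \<times> Pord_n (n - m)"
  using map_image_u_in_Pord_n[OF finite_J] map_image_u_in_Pord_n[OF finite_K] card_K
  by (auto simp: Pord'_iff phi_ord_split)

lemma phi_ord_inv_in_Pord':
  "L \<in> Pord_n m \<times> Pord_n (n - m) \<Longrightarrow> phi_ord_inv L \<in> Pord' n J"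
  using ord_partition_on_map_image_elem_at[OF finite_J]
    ord_partition_on_map_image_elem_at[OF finite_K] card_K
  by (auto simp: Pord'_iff phi_ord_inv_def)

lemma phi_ord_inv_phi_ord:
  "Ps \<in> Pord' n J \<Longrightarrow> phi_ord_inv (phi_ord n J Ps) = Ps"
  using map_image_elem_at_u[OF finite_J] map_image_elem_at_u[OF finite_K]
  by (auto simp: Pord'_iff phi_ord_split phi_ord_inv_def)

lemma phi_ord_phi_ord_inv:
  assumes "L \<in> Pord_n m \<times> Pord_n (n - m)"
  shows "phi_ord n J (phi_ord_inv L) = L"
proof -
  obtain L1 L2 where L: "L = (L1, L2)" "L1 \<in> Pord_n m" "L2 \<in> Pord_n (card K)"
    using assms card_K by auto
  then show ?thesis
    using phi_ord_split[OF ord_partition_on_map_image_elem_at[OF finite_J]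
        ord_partition_on_map_image_elem_at[OF finite_K]]
      map_image_u_elem_at[OF finite_J] map_image_u_elem_at[OF finite_K]
    by (simp add: phi_ord_inv_def)
qed

lemma bij_betw_phi_ord: "bij_betw (phi_ord n J) (Pord' n J) (Pord_n m \<times> Pord_n (n - m))"
  by (rule bij_betwI[where g = phi_ord_inv])
    (auto simp: phi_ord_in_Pord_n phi_ord_inv_in_Pord' phi_ord_inv_phi_ord phi_ord_phi_ord_inv)

lemma phi_set:
  assumes "Ps \<in> Pord' n J"
  shows "phi n J (set Ps) = map_prod set set (phi_ord n J Ps)"
proof -
  obtain A B where AB: "Ps = A @ B" "ord_partition_on J A" "ord_partition_on K B"
    using assms by (auto simp: Pord'_iff)
  then have P: "partition_on J (set A)" "partition_on K (set B)"
    by (auto simp: ord_partition_on_def)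
  have "{I \<in> set Ps. I \<subseteq> J} = set A"
    using blocks_subset_eq[OF P J_Int_K] AB(1) by simp
  moreover have "{I \<in> set Ps. I \<subseteq> K} = set B"
    using blocks_subset_eq[OF P(2,1)] J_Int_K AB(1) by (simp add: Int_commute Un_commute)
  ultimately show ?thesis
    using AB by (simp add: phi_def phi_ord_split)
qed

definition phi_inv :: "nat set set \<times> nat set set \<Rightarrow> nat set set" where
  "phi_inv = (\<lambda>(Q1, Q2). (`) (elem_at J) ` Q1 \<union> (`) (elem_at K) ` Q2)"

lemma set_phi_ord_inv: "set (phi_ord_inv L) = phi_inv (map_prod set set L)"
  by (cases L) (simp add: phi_ord_inv_def phi_inv_def)

lemma bij_betw_phi: "bij_betw (phi n J) (Part' n J) (Part_n m \<times> Part_n (n - m))"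
proof (rule bij_betwI[where g = phi_inv])
  have Part_n_pairs: "map_prod set set ` (Pord_n m \<times> Pord_n (n - m)) = Part_n m \<times> Part_n (n - m)"
    by (rule map_prod_surj_on) (simp_all add: Part_n_eq_set_Pord_n)
  show "phi n J \<in> Part' n J \<rightarrow> Part_n m \<times> Part_n (n - m)"
  proof
    fix P assume "P \<in> Part' n J"
    then obtain Ps where "P = set Ps" "Ps \<in> Pord' n J"
      unfolding Part'_def by (rule imageE)
    moreover have "map_prod set set (phi_ord n J Ps) \<in> Part_n m \<times> Part_n (n - m)"
      using imageI[OF phi_ord_in_Pord_n[OF calculation(2)], of "map_prod set set"]
      unfolding Part_n_pairs .
    ultimately show "phi n J P \<in> Part_n m \<times> Part_n (n - m)"
      using phi_set by simp
  qed
  show "phi_inv \<in> Part_n m \<times> Part_n (n - m) \<rightarrow> Part' n J"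
  proof
    fix Q assume "Q \<in> Part_n m \<times> Part_n (n - m)"
    then have "Q \<in> map_prod set set ` (Pord_n m \<times> Pord_n (n - m))"
      using Part_n_pairs by simp
    then obtain L where "Q = map_prod set set L" "L \<in> Pord_n m \<times> Pord_n (n - m)"
      by (rule imageE)
    then show "phi_inv Q \<in> Part' n J"
      using phi_ord_inv_in_Pord' by (simp add: Part'_def flip: set_phi_ord_inv)
  qed
  show "phi_inv (phi n J P) = P" if P: "P \<in> Part' n J" for P
  proof -
    obtain Ps where "P = set Ps" "Ps \<in> Pord' n J"
      using P unfolding Part'_def by (rule imageE)
    then show ?thesis
      using phi_ord_inv_phi_ord by (simp add: phi_set flip: set_phi_ord_inv)
  qed
  show "phi n J (phi_inv Q) = Q" if "Q \<in> Part_n m \<times> Part_n (n - m)" for Q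
  proof -
    have "Q \<in> map_prod set set ` (Pord_n m \<times> Pord_n (n - m))"
      using that Part_n_pairs by simp
    then obtain L where "Q = map_prod set set L" "L \<in> Pord_n m \<times> Pord_n (n - m)"
      by (rule imageE)
    then show ?thesis
      using phi_set[OF phi_ord_inv_in_Pord'] phi_ord_phi_ord_inv
      by (simp flip: set_phi_ord_inv)
  qed
qed

lemma sigma0_elem_at_J: "r \<in> {1..m} \<Longrightarrow> sigma0 n J (elem_at J r) = r"
  using bij_betwE[OF bij_betw_elem_at[OF finite_J]] u_elem_at[OF finite_J]
  by (auto simp: sigma0_def)

lemma sigma0_elem_at_K: "r \<in> {1..n - m} \<Longrightarrow> sigma0 n J (elem_at K r) = m + r"
  using bij_betwE[OF bij_betw_elem_at[OF finite_K]] u_elem_at[OF finite_K] J_Int_K card_K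
  by (auto simp: sigma0_def)

lemma sigma0_permutes: "sigma0 n J permutes {1..n}"
proof (rule bij_imp_permutes)
  have on_J: "bij_betw (sigma0 n J) J {1..m}"
    using bij_betw_u[OF finite_J] by (subst bij_betw_cong[where g = "u J"]) (simp_all add: sigma0_def)
  have "bij_betw (\<lambda>r. m + r) {1..n - m} {m + 1..n}"
    by (rule bij_betwI[where g = "\<lambda>r. r - m"]) (use m_le_n in auto)
  then have "bij_betw (\<lambda>i. m + u K i) K {m + 1..n}"
    using bij_betw_trans[OF bij_betw_u[OF finite_K], of _ "{m + 1..n}"] card_K
    by (simp add: comp_def)
  then have on_K: "bij_betw (sigma0 n J) K {m + 1..n}"
    using J_Int_K by (subst bij_betw_cong[where g = "\<lambda>i. m + u K i"]) (auto simp: sigma0_def)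
  have "{1..m} \<union> {m + 1..n} = {1..n}"
    using m_le_n by auto
  then show "bij_betw (sigma0 n J) {1..n} {1..n}"
    using bij_betw_combine[OF on_J on_K] J_Un_K by auto
  show "sigma0 n J x = x" if "x \<notin> {1..n}" for x
    using that J_Un_K by (auto simp: sigma0_def)
qed

lemma sigmaP_inv_split:
  assumes "ord_partition_on J A" "ord_partition_on K B"
  shows "r \<in> {1..m} \<Longrightarrow> sigmaP_inv (A @ B) r = elem_at J (sigmaP_inv (map ((`) (u J)) A) r)"
    and "r \<in> {1..n - m} \<Longrightarrow>
           sigmaP_inv (A @ B) (m + r) = elem_at K (sigmaP_inv (map ((`) (u K)) B) r)"
proof -
  define w1 where "w1 = block_word (map ((`) (u J)) A)"
  define w2 where "w2 = block_word (map ((`) (u K)) B)"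
  have "length w1 = m" "length w2 = n - m"
    using block_word_ord_partition_on(3)[of "{1.._}"] map_image_u_in_Pord_n[OF finite_J assms(1)]
      map_image_u_in_Pord_n[OF finite_K assms(2)] card_K
    by (auto simp: w1_def w2_def Pord_n_eq)
  moreover have "\<forall>I\<in>set A. I \<subseteq> J" "\<forall>I\<in>set B. I \<subseteq> K"
    using assms by (auto simp: ord_partition_on_def partition_on_def)
  then have "block_word (A @ B) = map (elem_at J) w1 @ map (elem_at K) w2"
    by (simp add: w1_def w2_def block_word_append block_word_map_image_u finite_J finite_K)
  ultimately show "r \<in> {1..m} \<Longrightarrow> sigmaP_inv (A @ B) r = elem_at J (sigmaP_inv (map ((`) (u J)) A) r)"
    and "r \<in> {1..n - m} \<Longrightarrow>
           sigmaP_inv (A @ B) (m + r) = elem_at K (sigmaP_inv (map ((`) (u K)) B) r)"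
    using m_le_n by (auto simp: sigmaP_inv_block_word nth_append w1_def[symmetric] w2_def[symmetric])
qed

lemma sigma0_comp_sigmaP_inv:
  assumes "ord_partition_on J A" "ord_partition_on K B"
  defines "\<sigma>1 \<equiv> sigmaP_inv (map ((`) (u J)) A)" and "\<sigma>2 \<equiv> sigmaP_inv (map ((`) (u K)) B)"
  defines "\<tau> \<equiv> \<lambda>x. if x \<in> {m + 1..m + (n - m)} then \<sigma>2 (x - m) + m else x"
  shows "sigma0 n J \<circ> sigmaP_inv (A @ B) = \<sigma>1 \<circ> \<tau>"
proof
  have \<sigma>1: "\<sigma>1 permutes {1..m}" and \<sigma>2: "\<sigma>2 permutes {1..n - m}"
    using sigmaP_inv_permutes map_image_u_in_Pord_n[OF finite_J assms(1)]
      map_image_u_in_Pord_n[OF finite_K assms(2)] card_K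
    by (simp_all add: \<sigma>1_def \<sigma>2_def)
  have AB: "sigmaP_inv (A @ B) permutes {1..n}"
    using sigmaP_inv_permutes ord_partition_on_append[OF assms(1,2) J_Int_K] J_Un_K
    by (simp add: Pord_n_eq)
  fix x
  consider "x \<in> {1..m}" | "x - m \<in> {1..n - m}" "x = m + (x - m)" | "x \<notin> {1..n}"
    by (cases "x \<in> {1..n}"; cases "x \<le> m") auto
  then show "(sigma0 n J \<circ> sigmaP_inv (A @ B)) x = (\<sigma>1 \<circ> \<tau>) x"
  proof cases
    case 1
    then show ?thesis
      using sigmaP_inv_split(1)[OF assms(1,2) 1] sigma0_elem_at_J permutes_in_image[OF \<sigma>1]
      by (simp add: \<sigma>1_def \<tau>_def)
  next
    case 2
    then have "\<sigma>2 (x - m) \<in> {1..n - m}"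
      using permutes_in_image[OF \<sigma>2] by blast
    then show ?thesis
      using 2 sigmaP_inv_split(2)[OF assms(1,2) 2(1)] sigma0_elem_at_K permutes_not_in[OF \<sigma>1]
      by (auto simp: \<sigma>2_def[symmetric] \<tau>_def add.commute)
  next
    case 3
    then show ?thesis
      using permutes_not_in[OF AB] permutes_not_in[OF sigma0_permutes] permutes_not_in[OF \<sigma>1] m_le_n
      by (auto simp: \<tau>_def)
  qed
qed

lemma eps_phi_ord:
  assumes "Ps \<in> Pord' n J" "phi_ord n J Ps = (P1, P2)"
  shows "eps Ps = eps0 n J * eps P1 * eps P2"
proof -
  obtain A B where AB: "Ps = A @ B" "ord_partition_on J A" "ord_partition_on K B"
    using assms(1) Pord'_iff by blast
  have P: "P1 = map ((`) (u J)) A" "P2 = map ((`) (u K)) B"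
    using assms(2) phi_ord_split[OF AB(2,3)] AB(1) by simp_all
  have P_in: "P1 \<in> Pord_n m" "P2 \<in> Pord_n (n - m)"
    using phi_ord_in_Pord_n[OF assms(1)] assms(2) by simp_all
  have Ps_in: "Ps \<in> Pord_n n"
    using assms(1) by (simp add: Pord'_def)
  define \<tau> where "\<tau> = (\<lambda>x. if x \<in> {m + 1..m + (n - m)} then sigmaP_inv P2 (x - m) + m else x)"
  have \<tau>: "\<tau> permutes {m + 1..m + (n - m)}" "sign \<tau> = sign (sigmaP_inv P2)"
    using shift_permutes[OF sigmaP_inv_permutes[OF P_in(2)], of m] by (simp_all add: \<tau>_def)
  have perm: "permutation (sigma0 n J)" "permutation (sigmaP_inv Ps)"
    "permutation (sigmaP_inv P1)" "permutation \<tau>"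
    using permutes_imp_permutation sigma0_permutes sigmaP_inv_permutes[OF Ps_in]
      sigmaP_inv_permutes[OF P_in(1)] \<tau>(1) by blast+
  have "sigma0 n J \<circ> sigmaP_inv Ps = sigmaP_inv P1 \<circ> \<tau>"
    unfolding AB(1) P \<tau>_def by (rule sigma0_comp_sigmaP_inv[OF AB(2,3)])
  then have "sign (sigma0 n J) * sign (sigmaP_inv Ps) = sign (sigmaP_inv P1) * sign (sigmaP_inv P2)"
    using sign_compose[OF perm(1,2)] sign_compose[OF perm(3,4)] \<tau>(2) by simp
  then have "sign (sigmaP_inv Ps) = sign (sigma0 n J) * sign (sigmaP_inv P1) * sign (sigmaP_inv P2)"
    by (metis mult.assoc mult_1 sign_idempotent)
  then show ?thesis
    using eps_eq_sign_sigmaP_inv Ps_in P_in by (simp add: eps0_def)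
qed

lemma eps'_phi_ord:
  assumes "Ps \<in> Pord' n J" "phi_ord n J Ps = (P1, P2)"
  shows "eps' Ps = eps' P1 * eps' P2"
proof -
  obtain A B where AB: "Ps = A @ B" "ord_partition_on J A" "ord_partition_on K B"
    using assms(1) Pord'_iff by blast
  have "P1 = map ((`) (u J)) A" "P2 = map ((`) (u K)) B"
    using assms(2) phi_ord_split[OF AB(2,3)] AB(1) by simp_all
  moreover have "inj_on (u J) (\<Union>(set A))" "inj_on (u K) (\<Union>(set B))"
    using AB bij_betw_imp_inj_on[OF bij_betw_u[OF finite_J]]
      bij_betw_imp_inj_on[OF bij_betw_u[OF finite_K]]
    by (auto simp: ord_partition_on_def partition_on_def)
  ultimately show ?thesis
    using AB(1) by (simp add: eps'_append eps'_map_image)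
qed

end

section \<open>Weights of the same sign away from \<open>J\<close>\<close>

lemma Pord'_eq: "Pord' n J = {Ps \<in> Pord_n n. \<exists>r\<in>{1..length Ps}. prefix_union Ps r = J}"
  by (auto simp: Pord'_def prefix_union_def)

lemma Pord_Int_Pord'_empty:
  assumes "\<not> sJ g J > 0"
  shows "Pord n g \<inter> Pord' n J = {}"
  using assms by (auto simp: Pord_eq Pord'_eq)

lemma Pord_iff_outside_Pord':
  assumes same_sign: "\<And>K. K \<subseteq> {1..n} \<Longrightarrow> K \<noteq> J \<Longrightarrow> sJ g K > 0 \<longleftrightarrow> sJ f K > 0"
    and "Ps \<notin> Pord' n J"
  shows "Ps \<in> Pord n g \<longleftrightarrow> Ps \<in> Pord n f"
proof (cases "Ps \<in> Pord_n n")
  case True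
  then have "prefix_union Ps i \<subseteq> {1..n}" "prefix_union Ps i \<noteq> J" if "i \<in> {1..length Ps}" for i
    using assms(2) that prefix_union_subset[of "{1..n}" Ps] by (auto simp: Pord'_eq Pord_n_def)
  then show ?thesis
    using True same_sign by (auto simp: Pord_eq)
qed (simp add: Pord_eq)

lemma Pord_eq_Un_Pord':
  assumes "\<And>K. K \<subseteq> {1..n} \<Longrightarrow> K \<noteq> J \<Longrightarrow> sJ g K > 0 \<longleftrightarrow> sJ f K > 0" "\<not> sJ g J > 0"
  shows "Pord n f = Pord n g \<union> (Pord' n J \<inter> Pord n f)"
proof (intro equalityI subsetI)
  fix Ps assume "Ps \<in> Pord n f"
  then show "Ps \<in> Pord n g \<union> (Pord' n J \<inter> Pord n f)"
    using Pord_iff_outside_Pord'[OF assms(1)] by (cases "Ps \<in> Pord' n J") simp_all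
next
  fix Ps assume "Ps \<in> Pord n g \<union> (Pord' n J \<inter> Pord n f)"
  moreover have "Ps \<in> Pord n f" if "Ps \<in> Pord n g"
  proof -
    have "Ps \<notin> Pord' n J"
      using that Pord_Int_Pord'_empty[OF assms(2)] by blast
    then show ?thesis
      using that Pord_iff_outside_Pord'[OF assms(1)] by simp
  qed
  ultimately show "Ps \<in> Pord n f" by blast
qed

lemma Part'_if_block:
  assumes "partition_on {1..n} P" "J \<in> P"
  shows "P \<in> Part' n J"
proof -
  have "finite (P - {J})"
    using finite_elements[OF _ assms(1)] by simp
  then obtain L where L: "set L = P - {J}" "distinct L"
    by (metis finite_distinct_list)
  then have P: "set (J # L) = P"
    using assms(2) by auto
  then have "J # L \<in> Pord_n n"
    using L assms(1) by (simp add: Pord_n_def)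
  then have "J # L \<in> Pord' n J"
    unfolding Pord'_def by (intro CollectI conjI bexI[of _ 1]) simp_all
  with P show ?thesis
    unfolding Part'_def by blast
qed

lemma Part_Int_Part'_empty:
  assumes "\<not> sJ g J > 0"
  shows "Part n g \<inter> Part' n J = {}"
proof (intro equals0I)
  fix P assume "P \<in> Part n g \<inter> Part' n J"
  then obtain A B where P: "P = set (A @ B)" "ord_partition_on {1..n} (A @ B)" "A \<noteq> []"
    "\<Union>(set A) = J" "\<forall>I\<in>P. sJ g I > 0"
    by (auto simp: Part_def Part'_def Pord'_iff_append Pord_n_eq)
  then have A: "partition_on J (set A)"
    using ord_partition_on_appendD(1)[OF P(2)] by (simp add: ord_partition_on_def)
  have "finite J"
    using P(2,4) by (auto simp: ord_partition_on_def partition_on_def intro: finite_subset)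
  then have "sJ g J = (\<Sum>I\<in>set A. sJ g I)"
    using sum.partition[OF _ A] by (simp add: sJ_def)
  also have "\<dots> > 0"
    using P(1,3,5) by (intro sum_pos) auto
  finally show False
    using assms by simp
qed

lemma Part_eq_Un_Part':
  assumes same_sign: "\<And>K. K \<subseteq> {1..n} \<Longrightarrow> K \<noteq> J \<Longrightarrow> sJ g K > 0 \<longleftrightarrow> sJ f K > 0"
    and "\<not> sJ g J > 0"
  shows "Part n f = Part n g \<union> (Part' n J \<inter> Part n f)"
proof -
  have off_J: "P \<in> Part n g \<longleftrightarrow> P \<in> Part n f" if "partition_on {1..n} P" "J \<notin> P" for P
  proof -
    have "I \<subseteq> {1..n}" "I \<noteq> J" if "I \<in> P" for I
      using partition_onD1[OF \<open>partition_on {1..n} P\<close>] \<open>J \<notin> P\<close> that by auto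
    then show ?thesis
      using same_sign that(1) by (auto simp: Part_def Part_n_def)
  qed
  show ?thesis
  proof (intro equalityI subsetI)
    fix P assume P: "P \<in> Part n f"
    then show "P \<in> Part n g \<union> (Part' n J \<inter> Part n f)"
      using off_J Part'_if_block by (cases "J \<in> P") (auto simp: Part_def Part_n_def)
  next
    fix P assume "P \<in> Part n g \<union> (Part' n J \<inter> Part n f)"
    moreover have "J \<notin> P" if "P \<in> Part n g"
      using that assms(2) by (auto simp: Part_def)
    ultimately show "P \<in> Part n f"
      using off_J by (auto simp: Part_def Part_n_def)
  qed
qed

lemma finite_Pord: "finite (Pord n f)"
proof (rule finite_subset)
  show "Pord n f \<subseteq> {xs. set xs \<subseteq> Pow {1..n} \<and> distinct xs}"
    by (auto simp: Pord_def Pord_n_def partition_on_def)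
  show "finite {xs. set xs \<subseteq> Pow {1..n} \<and> distinct xs}"
    by (rule finite_subset_distinct) simp
qed

lemma finite_Part: "finite (Part n f)"
  using finitely_many_partition_on[of "{1..n}"] by (auto simp: Part_def Part_n_def)

section \<open>The minimal-density set \<open>J\<close>\<close>

lemma sJ_lam_prime:
  assumes "finite K"
  shows "sJ (lam_prime n lam J) K = sJ lam K - delta n lam * card (K \<inter> J)"
proof -
  have "sJ (lam_prime n lam J) K = sJ lam K - (\<Sum>i\<in>K. if i \<in> J then delta n lam else 0)"
    by (simp add: sJ_def lam_prime_def sum_subtractf[symmetric] if_distrib cong: if_cong)
  also have "(\<Sum>i\<in>K. if i \<in> J then delta n lam else 0) = delta n lam * card (K \<inter> J)"
    using sum.inter_restrict[OF assms, of "\<lambda>_. delta n lam" J] by (simp add: mult.commute)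
  finally show ?thesis .
qed

locale minimal_density_set =
  fixes n :: nat and lam :: "nat \<Rightarrow> real" and J :: "nat set"
  assumes pos: "(\<Sum>i=1..n. lam i) > 0"
    and J_sub: "J \<subseteq> {1..n}"
    and J_delta: "sJ lam J / real (card J) = delta n lam"
    and J_card: "card J = Nmin n lam"
begin

abbreviation \<delta> :: real where "\<delta> \<equiv> delta n lam"
abbreviation lam' :: "nat \<Rightarrow> real" where "lam' \<equiv> lam_prime n lam J"

lemma finite_densities: "finite {sJ lam K / real (card K) | K. K \<subseteq> {1..n} \<and> sJ lam K > 0}"
proof -
  have "finite ((\<lambda>K. sJ lam K / real (card K)) ` Pow {1..n})"
    by simp
  then show ?thesis
    by (rule finite_subset[rotated]) auto
qed

lemma delta_le:
  assumes "K \<subseteq> {1..n}" "sJ lam K > 0"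
  shows "\<delta> \<le> sJ lam K / real (card K)"
  unfolding delta_def using assms by (intro Min_le[OF finite_densities]) auto

lemma card_pos:
  assumes "K \<subseteq> {1..n}" "sJ lam K > 0"
  shows "card K > 0"
proof -
  have "K \<noteq> {}"
    using assms(2) by (auto simp: sJ_def)
  then show ?thesis
    using finite_subset[OF assms(1)] by (simp add: card_gt_0_iff)
qed

lemma delta_pos: "\<delta> > 0"
proof -
  have "sJ lam {1..n} > 0"
    using pos by (simp add: sJ_def)
  then have "\<delta> \<in> {sJ lam K / real (card K) | K. K \<subseteq> {1..n} \<and> sJ lam K > 0}"
    unfolding delta_def by (intro Min_in[OF finite_densities]) auto
  then obtain K where "K \<subseteq> {1..n}" "sJ lam K > 0" "\<delta> = sJ lam K / real (card K)"
    by blast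
  then show ?thesis
    using card_pos by simp
qed

lemma delta_card_le:
  assumes "K \<subseteq> {1..n}" "sJ lam K > 0"
  shows "\<delta> * card K \<le> sJ lam K"
  using delta_le[OF assms] card_pos[OF assms] by (simp add: field_simps)

lemma card_J_pos: "card J > 0"
  using J_delta delta_pos by (cases "card J = 0") auto

lemma sJ_J: "sJ lam J = \<delta> * card J"
  using J_delta card_J_pos by (simp add: field_simps)

lemma card_J_le:
  assumes "K \<subseteq> {1..n}" "sJ lam K / real (card K) = \<delta>"
  shows "card J \<le> card K"
proof -
  have "finite (card ` Pow {1..n})"
    by simp
  then have "finite {card K | K. K \<subseteq> {1..n} \<and> sJ lam K / real (card K) = \<delta>}"
    by (rule finite_subset[rotated]) auto
  then show ?thesis
    unfolding J_card Nmin_def using assms by (intro Min_le) auto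
qed

lemma delta_card_Int_less:
  assumes "K \<subseteq> {1..n}" "sJ lam K > 0" "K \<noteq> J"
  shows "\<delta> * card (K \<inter> J) < sJ lam K"
proof (cases "K \<subseteq> J")
  case True
  then have "card K < card J"
    using assms(3) psubset_card_mono[OF finite_subset[OF J_sub]] by blast
  then have "sJ lam K / real (card K) \<noteq> \<delta>"
    using card_J_le[OF assms(1)] by fastforce
  then have "\<delta> < sJ lam K / real (card K)"
    using delta_le[OF assms(1,2)] by simp
  then show ?thesis
    using True card_pos[OF assms(1,2)] by (simp add: field_simps Int_absorb2)
next
  case False
  then have "card (K \<inter> J) < card K"
    using assms(1) by (intro psubset_card_mono) (auto intro: finite_subset)
  then have "\<delta> * card (K \<inter> J) < \<delta> * card K"
    using delta_pos by simp
  also have "\<dots> \<le> sJ lam K"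
    by (rule delta_card_le[OF assms(1,2)])
  finally show ?thesis .
qed

lemma lam_prime_pos_iff:
  assumes "K \<subseteq> {1..n}" "K \<noteq> J"
  shows "sJ lam' K > 0 \<longleftrightarrow> sJ lam K > 0"
proof -
  have eq: "sJ lam' K = sJ lam K - \<delta> * card (K \<inter> J)"
    using sJ_lam_prime[OF finite_subset[OF assms(1)]] by simp
  have "\<delta> * card (K \<inter> J) \<ge> 0"
    using delta_pos by simp
  then show ?thesis
    using eq delta_card_Int_less[OF assms(1) _ assms(2)] by (auto simp: algebra_simps)
qed

lemma sJ_lam_prime_J: "sJ lam' J = 0"
  using sJ_lam_prime[OF finite_subset[OF J_sub]] sJ_J by simp

lemma sJ_Un_J_pos_iff:
  assumes "V \<subseteq> {1..n}" "V \<inter> J = {}" "V \<noteq> {}"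
  shows "sJ lam (J \<union> V) > 0 \<longleftrightarrow> sJ lam V > 0"
proof -
  have fin: "finite J" "finite V"
    using assms(1) J_sub by (auto intro: finite_subset)
  have disj: "J \<inter> V = {}"
    using assms(2) by blast
  have sum: "sJ lam (J \<union> V) = \<delta> * card J + sJ lam V"
    using sum.union_disjoint[OF fin disj, of lam] sJ_J unfolding sJ_def by linarith
  have "sJ lam V > 0" if "sJ lam (J \<union> V) > 0"
  proof -
    have "\<delta> * card (J \<union> V) \<le> sJ lam (J \<union> V)"
      using delta_card_le that assms(1) J_sub by simp
    moreover have "card (J \<union> V) = card J + card V" "card V > 0"
      using card_Un_disjoint[OF fin disj] assms(3) fin(2) by auto
    moreover have "\<delta> * card V > 0"
      using delta_pos calculation(3) by simp
    ultimately show ?thesis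
      using sum by (simp add: distrib_left)
  qed
  moreover have "\<delta> * card J \<ge> 0"
    using delta_pos by simp
  ultimately show ?thesis
    using sum by auto
qed

sublocale coordinate_split n J
  by unfold_locales (use J_sub card_J_pos in auto)

lemma sJ_K_pos:
  assumes "K \<noteq> {}"
  shows "sJ lam K > 0"
proof -
  have "K \<subseteq> {1..n}" "K \<inter> J = {}"
    using J_Int_K by (auto simp: Kc_def)
  moreover have "sJ lam (J \<union> K) > 0"
    using pos J_Un_K by (simp add: sJ_def)
  ultimately show ?thesis
    using sJ_Un_J_pos_iff assms by blast
qed

lemma sJ_J_pos: "sJ lam J > 0"
  using sJ_J delta_pos card_J_pos by simp

lemma mu_eq: "mu lam J = (\<lambda>r. lam (elem_at J r))"
  by (simp add: fun_eq_iff mu_def)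

lemma nu_eq: "nu n lam J = (\<lambda>r. lam (elem_at K r))"
  by (simp add: fun_eq_iff nu_def)

lemma Pord_lam_eq: "Pord n lam = Pord n lam' \<union> (Pord' n J \<inter> Pord n lam)"
  by (rule Pord_eq_Un_Pord'[OF lam_prime_pos_iff]) (simp_all add: sJ_lam_prime_J)

lemma Pord_lam_prime_Int: "Pord n lam' \<inter> (Pord' n J \<inter> Pord n lam) = {}"
  using Pord_Int_Pord'_empty[of lam' J n] sJ_lam_prime_J by auto

lemma Part_lam_eq: "Part n lam = Part n lam' \<union> (Part' n J \<inter> Part n lam)"
  by (rule Part_eq_Un_Part'[OF lam_prime_pos_iff]) (simp_all add: sJ_lam_prime_J)

lemma Part_lam_prime_Int: "Part n lam' \<inter> (Part' n J \<inter> Part n lam) = {}"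
  using Part_Int_Part'_empty[of lam' J n] sJ_lam_prime_J by auto

lemma Pord_append_iff:
  assumes "ord_partition_on J A" "ord_partition_on K B"
  shows "A @ B \<in> Pord n lam \<longleftrightarrow>
    (\<forall>i\<in>{1..length A}. sJ lam (prefix_union A i) > 0) \<and>
    (\<forall>j\<in>{1..length B}. sJ lam (prefix_union B j) > 0)"
proof -
  have "\<Union>(set A) = J"
    using assms(1) by (simp add: ord_partition_on_def partition_on_def)
  then have "prefix_union (A @ B) (length A + j) = J \<union> prefix_union B j" for j
    by (auto simp: prefix_union_def)
  moreover have "prefix_union B j \<subseteq> {1..n}" "prefix_union B j \<inter> J = {}"
    "prefix_union B j \<noteq> {}" if "j \<in> {1..length B}" for j
    using prefix_union_subset[of K B j] prefix_union_nonempty[of K B j] that assms(2)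
    by (auto simp: ord_partition_on_def Kc_def)
  ultimately have "(\<forall>j\<in>{1..length B}. sJ lam (prefix_union (A @ B) (length A + j)) > 0) \<longleftrightarrow>
      (\<forall>j\<in>{1..length B}. sJ lam (prefix_union B j) > 0)"
    using sJ_Un_J_pos_iff by simp
  moreover have "(\<forall>i\<in>{1..length A}. sJ lam (prefix_union (A @ B) i) > 0) \<longleftrightarrow>
      (\<forall>i\<in>{1..length A}. sJ lam (prefix_union A i) > 0)"
    by (simp add: prefix_union_append)
  moreover have "A @ B \<in> Pord_n n"
    using ord_partition_on_append[OF assms J_Int_K] J_Un_K by (simp add: Pord_n_eq)
  ultimately show ?thesis
    using ball_atLeastAtMost_add_iff[of "length A" "length B"
        "\<lambda>i. sJ lam (prefix_union (A @ B) i) > 0"]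
    by (simp add: Pord_eq)
qed

lemma phi_ord_in_Pord_iff:
  assumes "Ps \<in> Pord' n J"
  shows "phi_ord n J Ps \<in> Pord m (mu lam J) \<times> Pord (n - m) (nu n lam J) \<longleftrightarrow> Ps \<in> Pord n lam"
proof -
  obtain A B where AB: "Ps = A @ B" "ord_partition_on J A" "ord_partition_on K B"
    using assms Pord'_iff by blast
  then show ?thesis
    using Pord_map_image_u_iff[OF finite_J AB(2), of lam]
      Pord_map_image_u_iff[OF finite_K AB(3), of lam] Pord_append_iff[OF AB(2,3)] card_K
    by (simp add: phi_ord_split mu_eq nu_eq)
qed

lemma phi_in_Part_iff:
  assumes "P \<in> Part' n J"
  shows "phi n J P \<in> Part m (mu lam J) \<times> Part (n - m) (nu n lam J) \<longleftrightarrow> P \<in> Part n lam"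
proof -
  obtain Ps where Ps: "P = set Ps" "Ps \<in> Pord' n J"
    using assms unfolding Part'_def by (rule imageE)
  then obtain A B where AB: "Ps = A @ B" "ord_partition_on J A" "ord_partition_on K B"
    using Pord'_iff by blast
  have "phi n J P = ((`) (u J) ` set A, (`) (u K) ` set B)"
    using phi_set[OF Ps(2)] by (simp add: Ps(1) AB(1) phi_ord_split[OF AB(2,3)])
  moreover have "P \<in> Part_n n"
    using Ps Part_n_eq_set_Pord_n[of n] by (auto simp: Pord'_def)
  ultimately show ?thesis
    using Part_image_u_iff[OF finite_J, of "set A" lam] Part_image_u_iff[OF finite_K, of "set B" lam]
      AB card_K
    by (auto simp: Ps(1) Part_def mu_eq nu_eq ord_partition_on_def)
qed

lemma bij_betw_phi_ord_Pord:
  "bij_betw (phi_ord n J) (Pord' n J \<inter> Pord n lam) (Pord m (mu lam J) \<times> Pord (n - m) (nu n lam J))"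
  by (rule bij_betw_Int[OF bij_betw_phi_ord phi_ord_in_Pord_iff]) (auto simp: Pord_def)

lemma bij_betw_phi_Part:
  "bij_betw (phi n J) (Part' n J \<inter> Part n lam) (Part m (mu lam J) \<times> Part (n - m) (nu n lam J))"
  by (rule bij_betw_Int[OF bij_betw_phi phi_in_Part_iff]) (auto simp: Part_def)

lemma J_first_in_Pord_Part:
  obtains Ps where "Ps \<in> Pord' n J \<inter> Pord n lam" "set Ps \<in> Part' n J \<inter> Part n lam"
proof -
  define B where "B = (if K = {} then [] else [K])"
  have B: "ord_partition_on K B" "\<forall>I\<in>set B. sJ lam I > 0"
    "\<forall>j\<in>{1..length B}. sJ lam (prefix_union B j) > 0"
    using sJ_K_pos
    by (auto simp: B_def ord_partition_on_def partition_on_space partition_on_empty prefix_union_def)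
  have A: "ord_partition_on J [J]"
    using J_nonempty by (simp add: ord_partition_on_def partition_on_space)
  have "[J] @ B \<in> Pord' n J"
    using A B(1) Pord'_iff by blast
  moreover have "[J] @ B \<in> Pord n lam"
    using Pord_append_iff[OF A B(1)] B(3) sJ_J_pos by (simp add: prefix_union_def)
  moreover have "set ([J] @ B) \<in> Part n lam"
    using calculation(2) B(2) sJ_J_pos by (auto simp: Part_def Part_n_def Pord_def Pord_n_def)
  ultimately show thesis
    using that by (auto simp: Part'_def)
qed

lemma card_Pord_lam_prime_less: "card (Pord n lam') < card (Pord n lam)"
proof (rule psubset_card_mono[OF finite_Pord])
  obtain Ps where "Ps \<in> Pord' n J \<inter> Pord n lam"
    using J_first_in_Pord_Part by blast
  then show "Pord n lam' \<subset> Pord n lam"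
    using Pord_lam_eq Pord_lam_prime_Int by blast
qed

lemma card_Part_lam_prime_less: "card (Part n lam') < card (Part n lam)"
proof (rule psubset_card_mono[OF finite_Part])
  obtain Ps where "set Ps \<in> Part' n J \<inter> Part n lam"
    using J_first_in_Pord_Part by blast
  then show "Part n lam' \<subset> Part n lam"
    using Part_lam_eq Part_lam_prime_Int by blast
qed

end

theorem mainTheorem14:
  fixes n :: nat and lam :: "nat \<Rightarrow> real" and J :: "nat set"
  assumes pos: "(\<Sum>i=1..n. lam i) > 0"
    and J_sub: "J \<subseteq> {1..n}"
    and J_delta: "sJ lam J / real (card J) = delta n lam"
    and J_card: "card J = Nmin n lam"
  shows
    \<comment> \<open>(i)\<close>
    "(\<forall>K. K \<subseteq> {1..n} \<and> K \<noteq> J \<longrightarrow>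
        (sJ (lam_prime n lam J) K > 0 \<longleftrightarrow> sJ lam K > 0))
     \<comment> \<open>(ii)\<close>
     \<and> Pord n lam = Pord n (lam_prime n lam J) \<union> (Pord' n J \<inter> Pord n lam)
     \<and> Pord n (lam_prime n lam J) \<inter> (Pord' n J \<inter> Pord n lam) = {}
     \<and> Part n lam = Part n (lam_prime n lam J) \<union> (Part' n J \<inter> Part n lam)
     \<and> Part n (lam_prime n lam J) \<inter> (Part' n J \<inter> Part n lam) = {}
     \<and> card (Pord n (lam_prime n lam J)) < card (Pord n lam)
     \<and> card (Part n (lam_prime n lam J)) < card (Part n lam)
     \<comment> \<open>well-definedness of phi_ord and phi\<close>
     \<and> phi_ord n J ` Pord' n J \<subseteq> Pord_n (card J) \<times> Pord_n (n - card J)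
     \<and> phi n J ` Part' n J \<subseteq> Part_n (card J) \<times> Part_n (n - card J)
     \<comment> \<open>(iii)\<close>
     \<and> (\<forall>P\<in>Pord' n J. \<forall>P1 P2. phi_ord n J P = (P1, P2) \<longrightarrow>
          eps P = eps0 n J * eps P1 * eps P2 \<and> eps' P = eps' P1 * eps' P2)
     \<comment> \<open>(iv)\<close>
     \<and> bij_betw (phi_ord n J) (Pord' n J \<inter> Pord n lam)
          (Pord (card J) (mu lam J) \<times> Pord (n - card J) (nu n lam J))
     \<and> bij_betw (phi n J) (Part' n J \<inter> Part n lam)
          (Part (card J) (mu lam J) \<times> Part (n - card J) (nu n lam J))"
proof -
  interpret minimal_density_set n lam J
    using assms by unfold_locales
  show ?thesis
  proof (intro conjI ballI allI impI)
    show "sJ (lam_prime n lam J) K > 0 \<longleftrightarrow> sJ lam K > 0" if "K \<subseteq> {1..n} \<and> K \<noteq> J" for K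
      using lam_prime_pos_iff that by blast
    show "phi_ord n J ` Pord' n J \<subseteq> Pord_n (card J) \<times> Pord_n (n - card J)"
      using phi_ord_in_Pord_n by blast
    show "phi n J ` Part' n J \<subseteq> Part_n (card J) \<times> Part_n (n - card J)"
      using bij_betw_imp_surj_on[OF bij_betw_phi] by simp
    show "eps P = eps0 n J * eps P1 * eps P2" "eps' P = eps' P1 * eps' P2"
      if "P \<in> Pord' n J" "phi_ord n J P = (P1, P2)" for P P1 P2
      using eps_phi_ord[OF that] eps'_phi_ord[OF that] by simp_all
  qed (fact Pord_lam_eq Pord_lam_prime_Int Part_lam_eq Part_lam_prime_Int
      card_Pord_lam_prime_less card_Part_lam_prime_less bij_betw_phi_ord_Pord bij_betw_phi_Part)+
qed

end
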